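(* Let $n\ge 1$ and $a\ge 2$ be integers and $r>0$. For $j\in\mathbb Z$ let $P_j$ be the point $\bigl(r\cos(2\pi j/n),\, r\sin(2\pi j/n)\bigr)$ on the circle of radius $r$ centered at the origin (so $P_j$ depends only on $j \bmod n$, and $P_0,\dots,P_{n-1}$ are $n$ equally spaced points on the circle). Then \[\sum_{k=0}^{n-1} |P_k P_{ak}| \;=\; 2rg\cot\left(\frac{\pi g}{2n}\right),\] where $|P_kP_{ak}|$ denotes the Euclidean distance between $P_k$ and $P_{ak}$, and $g=\gcd(a-1,n)$.
   Context: The sum counts, for each $k\in\{0,1,\dots,n-1\}$, the length of the segment joining point $k$ to point $ak \bmod n$; a segment may be counted twice (once from each endpoint) and degenerate segments (when $ak\equiv k \bmod n$) have length $0$. *)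

theory Defs
  imports "HOL-Analysis.Analysis"
begin

text \<open>The point P_j on the circle of radius r, as an element of the Euclidean plane
  real \<times> real (the product metric there is the Euclidean distance).\<close>
definition circ_pt :: "nat \<Rightarrow> real \<Rightarrow> int \<Rightarrow> real \<times> real" where
  "circ_pt n r j = (r * cos (2 * pi * real_of_int j / real n), r * sin (2 * pi * real_of_int j / real n))"

end

theory Submission
  imports Defs "HOL-Number_Theory.Cong"
begin

text \<open>The chord from P_k to P_{ak} has length 2r|sin(\<pi>(a-1)k/n)|. Writing a - 1 = gc and n = gm
  with g = gcd(a-1, n), the summand depends only on ck mod m, and k \<mapsto> ck mod m permutes the
  residues mod m because c and m are coprime. So the sum is g times 2r \<Sum>_{s<m} sin(\<pi>s/m), and
  the latter sum telescopes (Lagrange's identity) to cot(\<pi>/(2m)).\<close>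

lemma dist_cos_sin:
  fixes r x y :: real
  shows "dist (r * cos x, r * sin x) (r * cos y, r * sin y) = 2 * \<bar>r\<bar> * \<bar>sin ((x - y) / 2)\<bar>"
proof -
  have expand: "(r * c - r * c')\<^sup>2 + (r * s - r * s')\<^sup>2
      = r\<^sup>2 * ((c\<^sup>2 + s\<^sup>2) + (c'\<^sup>2 + s'\<^sup>2) - 2 * (c * c' + s * s'))" for c s c' s' :: real
    by (simp add: power2_eq_square algebra_simps)
  have "2 * ((x - y) / 2) = x - y"
    by simp
  note cos_half = cos_double_sin[of "(x - y) / 2", unfolded this]
  have "(r * cos x - r * cos y)\<^sup>2 + (r * sin x - r * sin y)\<^sup>2 = 2 * r\<^sup>2 * (1 - cos (x - y))"
    by (simp add: expand cos_diff algebra_simps)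
  also have "\<dots> = (2 * r * sin ((x - y) / 2))\<^sup>2"
    by (simp add: cos_half power_mult_distrib)
  finally show ?thesis
    by (simp add: dist_Pair_Pair dist_real_def abs_mult)
qed

lemma dist_circ_pt:
  "dist (circ_pt n r j) (circ_pt n r l) = 2 * \<bar>r\<bar> * \<bar>sin (pi * real_of_int (j - l) / real n)\<bar>"
proof -
  have "(2 * pi * real_of_int j / real n - 2 * pi * real_of_int l / real n) / 2
      = pi * real_of_int (j - l) / real n"
    by (simp add: diff_divide_distrib algebra_simps)
  then show ?thesis
    unfolding circ_pt_def dist_cos_sin by simp
qed

lemma sin_half_mult_sum_sin:
  fixes x :: real
  shows "2 * sin (x / 2) * (\<Sum>s<N. sin (real s * x)) = cos (x / 2) - cos ((real N - 1 / 2) * x)"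
proof (induction N)
  case 0
  then show ?case by simp
next
  case (Suc N)
  have "cos (x / 2 - real N * x) = cos (real N * x - x / 2)"
    by (metis cos_minus minus_diff_eq)
  then have "2 * sin (x / 2) * sin (real N * x)
      = cos ((real N - 1 / 2) * x) - cos ((real N + 1 / 2) * x)"
    by (simp add: sin_times_sin algebra_simps) (simp add: field_simps)
  with Suc show ?case
    by (simp add: algebra_simps)
qed

lemma sum_sin_pi_div:
  assumes "0 < m"
  shows "(\<Sum>s<m. sin (pi * real s / real m)) = cot (pi / (2 * real m))"
proof -
  define x where "x = pi / real m"
  have "sin (x / 2) > 0"
    unfolding x_def using assms by (intro sin_gt_zero) (auto simp: field_simps)
  moreover have "cos ((real m - 1 / 2) * x) = - cos (x / 2)"
  proof -
    have "(real m - 1 / 2) * x = pi - x / 2"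
      unfolding x_def using assms by (simp add: field_simps)
    then show ?thesis by simp
  qed
  ultimately have "(\<Sum>s<m. sin (real s * x)) = cos (x / 2) / sin (x / 2)"
    using sin_half_mult_sum_sin[of x m] by (simp add: field_simps)
  then show ?thesis
    unfolding x_def cot_def tan_def by (simp add: mult.commute)
qed

lemma abs_sin_pi_mod:
  fixes t m :: nat
  shows "\<bar>sin (pi * real (t mod m) / real m)\<bar> = \<bar>sin (pi * real t / real m)\<bar>"
proof (cases "m = 0")
  case False
  have "real t = real (t mod m) + real m * real (t div m)"
    by (metis of_nat_add of_nat_mult mod_mult_div_eq add.commute)
  then have "pi * real t / real m = pi * real (t mod m) / real m + real (t div m) * pi"
    using False by (simp add: field_simps)
  then show ?thesis
    by (simp add: sin_add abs_mult)
qed simp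

lemma sum_lessThan_mult_mod_periodic:
  fixes f :: "nat \<Rightarrow> 'a::semiring_1"
  assumes "\<And>k. f (k mod m) = f k"
  shows "(\<Sum>k<g * m. f k) = of_nat g * (\<Sum>k<m. f k)"
proof -
  have "(\<Sum>k\<in>{i * m..<i * m + m}. f k) = (\<Sum>k<m. f k)" for i
  proof -
    have "(\<Sum>k\<in>{i * m..<i * m + m}. f k) = (\<Sum>k<m. f (k + i * m))"
      using sum.shift_bounds_nat_ivl[of f 0 "i * m" m] by (simp add: add.commute lessThan_atLeast0)
    also have "\<dots> = (\<Sum>k<m. f k)"
      by (metis assms mod_mult_self1)
    finally show ?thesis .
  qed
  then show ?thesis
    using sum.nat_group[of f m g] by simp
qed

lemma bij_betw_mult_mod_lessThan:
  fixes c m :: nat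
  assumes "coprime c m"
  shows "bij_betw (\<lambda>k. c * k mod m) {..<m} {..<m}"
proof -
  have "inj_on (\<lambda>k. c * k mod m) {..<m}"
  proof
    fix x y assume "x \<in> {..<m}" "y \<in> {..<m}" "c * x mod m = c * y mod m"
    then show "x = y"
      using cong_mult_lcancel_nat[OF assms] cong_less_modulus_unique_nat
      unfolding cong_def by blast
  qed
  moreover have "(\<lambda>k. c * k mod m) ` {..<m} \<subseteq> {..<m}"
    by auto
  ultimately show ?thesis
    by (simp add: bij_betw_def endo_inj_surj)
qed

lemma sum_abs_sin_coprime_mult:
  fixes c m :: nat
  assumes "coprime c m" and "0 < m"
  shows "(\<Sum>k<m. \<bar>sin (pi * real (c * k) / real m)\<bar>) = cot (pi / (2 * real m))"
proof -
  have "(\<Sum>k<m. \<bar>sin (pi * real (c * k) / real m)\<bar>)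
      = (\<Sum>k<m. \<bar>sin (pi * real (c * k mod m) / real m)\<bar>)"
    by (simp add: abs_sin_pi_mod)
  also have "\<dots> = (\<Sum>s<m. \<bar>sin (pi * real s / real m)\<bar>)"
    using sum.reindex_bij_betw[OF bij_betw_mult_mod_lessThan[OF assms(1)],
        of "\<lambda>s. \<bar>sin (pi * real s / real m)\<bar>"] by simp
  also have "\<dots> = (\<Sum>s<m. sin (pi * real s / real m))"
  proof (intro sum.cong refl)
    fix s assume "s \<in> {..<m}"
    then have "pi * real s / real m \<le> pi"
      using assms(2) by (simp add: field_simps)
    then show "\<bar>sin (pi * real s / real m)\<bar> = sin (pi * real s / real m)"
      by (intro abs_of_nonneg sin_ge_zero) auto
  qed
  also have "\<dots> = cot (pi / (2 * real m))"
    using sum_sin_pi_div[OF assms(2)] .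
  finally show ?thesis .
qed

lemma sum_abs_sin_mult:
  fixes d n :: nat
  assumes "0 < n"
  shows "(\<Sum>k<n. \<bar>sin (pi * real (d * k) / real n)\<bar>)
         = real (gcd d n) * cot (pi * real (gcd d n) / (2 * real n))"
proof -
  define g where "g = gcd d n"
  define c where "c = d div g"
  define m where "m = n div g"
  have "0 < g"
    unfolding g_def using assms by simp
  have n: "n = g * m" and d: "d = g * c"
    unfolding m_def c_def g_def by simp_all
  with assms have "0 < m"
    by simp
  have "g * gcd c m = gcd d n"
    unfolding d n by (rule gcd_mult_distrib_nat)
  then have "coprime c m"
    using \<open>0 < g\<close> by (auto simp: coprime_iff_gcd_eq_1 g_def)
  define f where "f k = \<bar>sin (pi * real (c * k) / real m)\<bar>" for k
  have f_mod: "f (k mod m) = f k" for k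
    unfolding f_def by (metis abs_sin_pi_mod mod_mult_right_eq)
  have "(\<Sum>k<n. \<bar>sin (pi * real (d * k) / real n)\<bar>) = (\<Sum>k<g * m. f k)"
    unfolding f_def n d using \<open>0 < g\<close> by (simp add: field_simps)
  also have "\<dots> = real g * (\<Sum>k<m. f k)"
    using sum_lessThan_mult_mod_periodic[of f m g] f_mod by simp
  also have "(\<Sum>k<m. f k) = cot (pi / (2 * real m))"
    unfolding f_def using sum_abs_sin_coprime_mult[OF \<open>coprime c m\<close> \<open>0 < m\<close>] .
  also have "pi / (2 * real m) = pi * real g / (2 * real n)"
    using n \<open>0 < g\<close> by (simp add: field_simps)
  finally show ?thesis
    unfolding g_def .
qed

theorem theorem1:
  fixes n :: nat and a :: int and r :: real
  assumes "n \<ge> 1" and "a \<ge> 2" and "r > 0"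
  shows "(\<Sum>k<n. dist (circ_pt n r (int k)) (circ_pt n r (a * int k)))
         = 2 * r * real_of_int (gcd (a - 1) (int n)) * cot (pi * real_of_int (gcd (a - 1) (int n)) / (2 * real n))"
proof -
  define d where "d = nat (a - 1)"
  have d: "a - 1 = int d"
    unfolding d_def using assms(2) by simp
  have "dist (circ_pt n r (int k)) (circ_pt n r (a * int k))
      = 2 * r * \<bar>sin (pi * real (d * k) / real n)\<bar>" for k
  proof -
    have "int k - a * int k = - int (d * k)"
      using d by (simp add: algebra_simps)
    then show ?thesis
      using assms(3) by (simp add: dist_circ_pt)
  qed
  then have "(\<Sum>k<n. dist (circ_pt n r (int k)) (circ_pt n r (a * int k)))
      = 2 * r * (\<Sum>k<n. \<bar>sin (pi * real (d * k) / real n)\<bar>)"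
    by (simp add: sum_distrib_left)
  also have "\<dots> = 2 * r * real (gcd d n) * cot (pi * real (gcd d n) / (2 * real n))"
    using sum_abs_sin_mult[of n d] assms(1) by simp
  finally show ?thesis
    unfolding d by (simp add: gcd_int_int_eq)
qed

end
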